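(* Suppose that $\kappa = \nu^+$, and $\theta$ is a regular infinite cardinal less than $\nu$ such that $d(\theta,\nu) = \nu$. Then $\clubsuit_\kappa^*[NS_\kappa|E^\kappa_\theta]$ holds.
   Context: For cardinals $\tau\leq\mu$ with $\tau\geq1$, $\mu\geq\omega$, $d(\tau,\mu)$ is the least cardinality of an $X\subseteq[\mu]^\tau$ such that every $e\in[\mu]^\tau$ has a subset belonging to $X$. $E^\kappa_\theta$ is the set of limit ordinals below $\kappa$ of cofinality $\theta$; $NS_\kappa|E^\kappa_\theta = \{B\subseteq\kappa : B\cap E^\kappa_\theta \text{ nonstationary}\}$; for an ideal $J$ on $\kappa$, $J^* = \{A : \kappa\setminus A\in J\}$. $acc(\kappa)$ is the set of nonzero limit ordinals below $\kappa$. $\clubsuit_\kappa^*[J]$: there are $s^i_\alpha\subseteq\alpha$ with $\sup s^i_\alpha=\alpha$ for $i<\alpha\in acc(\kappa)$ such that $\{\alpha<\kappa : \exists i<\alpha\,(s^i_\alpha\subseteq A)\}\in J^*$ for every $A\subseteq\kappa$ of size $\kappa$. *)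

theory Defs
  imports Main
begin

text \<open>Ordinals below a cardinal kappa are represented by the field of a
cardinal well-order r (Card_order r); the ordinal order is r, and
underS r a is the set of ordinals strictly below a.\<close>

definition is_limit :: "'k rel \<Rightarrow> 'k \<Rightarrow> bool" where
  "is_limit r a \<longleftrightarrow> a \<in> Field r \<and> underS r a \<noteq> {} \<and>
     (\<forall>b\<in>underS r a. \<exists>c\<in>underS r a. b \<in> underS r c)"

definition acc_set :: "'k rel \<Rightarrow> 'k set" where
  "acc_set r = {a. is_limit r a}"

definition cofinal_in :: "'k rel \<Rightarrow> 'k set \<Rightarrow> 'k \<Rightarrow> bool" where
  "cofinal_in r S a \<longleftrightarrow> S \<subseteq> underS r a \<and> (\<forall>b\<in>underS r a. \<exists>c\<in>S. (b, c) \<in> r)"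

text \<open>cf(alpha) = theta, where theta is the cardinality of the set T\<close>
definition cof_eq :: "'k rel \<Rightarrow> 'k \<Rightarrow> 't set \<Rightarrow> bool" where
  "cof_eq r a T \<longleftrightarrow>
     (\<exists>C. cofinal_in r C a \<and> (card_of C, card_of T) \<in> ordIso) \<and>
     (\<forall>C. cofinal_in r C a \<longrightarrow> (card_of T, card_of C) \<in> ordLeq)"

definition E_cof :: "'k rel \<Rightarrow> 't set \<Rightarrow> 'k set" where
  "E_cof r T = {a. is_limit r a \<and> cof_eq r a T}"

definition club :: "'k rel \<Rightarrow> 'k set \<Rightarrow> bool" where
  "club r C \<longleftrightarrow> C \<subseteq> Field r \<and>
     (\<forall>b\<in>Field r. \<exists>c\<in>C. (b, c) \<in> r \<and> b \<noteq> c) \<and>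
     (\<forall>a. is_limit r a \<and> (\<forall>b\<in>underS r a. \<exists>c\<in>C \<inter> underS r a. (b, c) \<in> r) \<longrightarrow> a \<in> C)"

definition stationary :: "'k rel \<Rightarrow> 'k set \<Rightarrow> bool" where
  "stationary r S \<longleftrightarrow> S \<subseteq> Field r \<and> (\<forall>C. club r C \<longrightarrow> S \<inter> C \<noteq> {})"

definition NS_restr :: "'k rel \<Rightarrow> 't set \<Rightarrow> 'k set set" where
  "NS_restr r T = {B. B \<subseteq> Field r \<and> \<not> stationary r (B \<inter> E_cof r T)}"

definition dual_filter :: "'k rel \<Rightarrow> 'k set set \<Rightarrow> 'k set set" where
  "dual_filter r J = {A. A \<subseteq> Field r \<and> Field r - A \<in> J}"

definition clubsuit_star :: "'k rel \<Rightarrow> 'k set set \<Rightarrow> bool" where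
  "clubsuit_star r J \<longleftrightarrow>
     (\<exists>s :: 'k \<Rightarrow> 'k \<Rightarrow> 'k set.
        (\<forall>a\<in>acc_set r. \<forall>i\<in>underS r a. cofinal_in r (s a i) a) \<and>
        (\<forall>A. A \<subseteq> Field r \<and> (card_of A, r) \<in> ordIso \<longrightarrow>
           {a\<in>acc_set r. \<exists>i\<in>underS r a. s a i \<subseteq> A} \<in> dual_filter r J))"

definition subsets_of_card :: "'n set \<Rightarrow> 't set \<Rightarrow> 'n set set" where
  "subsets_of_card N T = {e. e \<subseteq> N \<and> (card_of e, card_of T) \<in> ordIso}"

definition d_family :: "'t set \<Rightarrow> 'n set \<Rightarrow> 'n set set \<Rightarrow> bool" where
  "d_family T N X \<longleftrightarrow> X \<subseteq> subsets_of_card N T \<and>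
     (\<forall>e\<in>subsets_of_card N T. \<exists>x\<in>X. x \<subseteq> e)"

definition d_equals_nu :: "'t set \<Rightarrow> 'n set \<Rightarrow> bool" where
  "d_equals_nu T N \<longleftrightarrow>
     (\<exists>X. d_family T N X \<and> (card_of X, card_of N) \<in> ordIso) \<and>
     (\<forall>X. d_family T N X \<longrightarrow> (card_of N, card_of X) \<in> ordLeq)"

end

theory Submission
  imports Defs
begin

text \<open>
  Fix a family \<open>X \<subseteq> [\<nu>]\<^sup>\<theta>\<close> of size \<open>\<nu>\<close> witnessing \<open>d(\<theta>,\<nu>) = \<nu>\<close>. Above some \<open>\<alpha>\<^sub>0\<close> every
  \<open>\<alpha> < \<kappa> = \<nu>\<^sup>+\<close> has cardinality \<open>\<nu>\<close>; choosing a bijection \<open>h\<^sub>\<alpha> : \<nu> \<rightarrow> \<alpha>\<close> and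
  indexing \<open>X\<close> by the ordinals below \<open>\<alpha>\<close>, the guesses at \<open>\<alpha>\<close> are the sets \<open>h\<^sub>\<alpha>[x]\<close>,
  \<open>x \<in> X\<close>. For \<open>A \<in> [\<kappa>]\<^sup>\<kappa>\<close>, the \<open>\<alpha> > \<alpha>\<^sub>0\<close> at which \<open>A\<close> is unbounded form a club.
  If such an \<open>\<alpha>\<close> has cofinality \<open>\<theta>\<close>, then \<open>A \<inter> \<alpha>\<close> contains a cofinal set \<open>e\<close> all of whose
  proper initial segments have size \<open>< \<theta>\<close>, so every subset of \<open>e\<close> of size \<open>\<theta>\<close> is cofinal in
  \<open>\<alpha>\<close>. Some \<open>x \<in> X\<close> lies inside \<open>h\<^sub>\<alpha>\<^sup>-\<^sup>1[e]\<close>, and then \<open>h\<^sub>\<alpha>[x] \<subseteq> A\<close> is a cofinal guess.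
\<close>

unbundle cardinal_syntax

lemma regularCard_small_subset_bounded:
  assumes "Card_order r" and "regularCard r" and "B \<subseteq> Field r" and "|B| <o r"
  shows "\<exists>i\<in>Field r. B \<subseteq> under r i"
proof (rule regularCard_UNION[OF assms(1,2) _ _ assms(4)])
  have "Well_order r" using assms(1) by (rule card_order_on_well_order_on)
  then show "relChain r (under r)"
    unfolding relChain_def by (meson under_incr wo_rel.TRANS wo_rel_def)
  show "B \<subseteq> (\<Union>i\<in>Field r. under r i)"
    using assms(3) \<open>Well_order r\<close> Refl_under_in wo_rel.REFL wo_rel_def by fastforce
qed

lemma cofinal_in_underS:
  assumes "Well_order r"
  shows "cofinal_in r (underS r a) a"
proof -
  have "(b, b) \<in> r" if "b \<in> underS r a" for b
    using that assms Order_Relation.underS_Field[of r a]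
    by (meson refl_onD subsetD wo_rel.REFL wo_rel_def)
  then show ?thesis unfolding cofinal_in_def by blast
qed

lemma cofinal_in_mono:
  assumes "cofinal_in r S a" and "S \<subseteq> S'" and "S' \<subseteq> underS r a"
  shows "cofinal_in r S' a"
  using assms unfolding cofinal_in_def by blast

lemma le_underS_trans:
  assumes "Well_order r" and "(a, b) \<in> r" and "b \<in> underS r c"
  shows "a \<in> underS r c"
proof -
  interpret r: wo_rel r using assms(1) by (simp add: wo_rel_def)
  show ?thesis
    using assms(2,3) r.TRANS r.ANTISYM unfolding underS_def by (blast dest: transD antisymD)
qed

lemma cof_eq_cofinal_subset_card_le:
  assumes "trans r" and "cof_eq r a T" and "cofinal_in r A a"
  shows "\<exists>D\<subseteq>A. cofinal_in r D a \<and> |D| \<le>o |T|"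
proof -
  obtain C where C: "cofinal_in r C a" "|C| =o |T|"
    using assms(2) unfolding cof_eq_def by blast
  have "\<forall>c\<in>C. \<exists>x\<in>A. (c, x) \<in> r"
    using C(1) assms(3) unfolding cofinal_in_def by blast
  then obtain f where f: "\<And>c. c \<in> C \<Longrightarrow> f c \<in> A \<and> (c, f c) \<in> r"
    by metis
  have "cofinal_in r (f ` C) a"
    using assms(1,3) C(1) f unfolding cofinal_in_def by (blast dest: transD)
  moreover have "|f ` C| \<le>o |T|"
    using card_of_image C(2) ordLeq_ordIso_trans by blast
  ultimately show ?thesis using f by blast
qed

text \<open>Restricting a cofinal family \<open>g ` T\<close> to the records of \<open>g\<close> along \<open>|T|\<close> yields a cofinal set
  whose proper initial segments have size \<open>< |T|\<close>.\<close>

definition records :: "'t rel \<Rightarrow> ('t \<Rightarrow> 'k) \<Rightarrow> 'k rel \<Rightarrow> 't set" where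
  "records t g r = {\<xi> \<in> Field t. \<forall>\<eta>\<in>underS t \<xi>. g \<eta> \<in> underS r (g \<xi>)}"

lemma records_unbounded:
  assumes "Well_order t" and "Well_order r" and "g ` Field t \<subseteq> Field r"
    and "\<xi> \<in> Field t" and "b \<in> Field r" and "(b, g \<xi>) \<in> r"
  shows "\<exists>\<xi>'\<in>records t g r. (b, g \<xi>') \<in> r"
proof -
  interpret r: wo_rel r using assms(2) by (simp add: wo_rel_def)
  interpret t: wo_rel t using assms(1) by (simp add: wo_rel_def)
  define S where "S = {\<xi> \<in> Field t. (b, g \<xi>) \<in> r}"
  have "\<xi> \<in> S" using assms(4,6) by (simp add: S_def)
  then obtain \<xi>' where \<xi>': "\<xi>' \<in> S" and least: "\<And>\<eta>. (\<eta>, \<xi>') \<in> t - Id \<Longrightarrow> \<eta> \<notin> S"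
    using wfE_min[OF t.WF] by metis
  have "g \<eta> \<in> underS r (g \<xi>')" if "\<eta> \<in> underS t \<xi>'" for \<eta>
  proof -
    have "\<eta> \<notin> S" using that least unfolding underS_def by blast
    moreover have "\<eta> \<in> Field t" using that Order_Relation.underS_Field by fast
    ultimately have "(b, g \<eta>) \<notin> r" and "g \<eta> \<in> Field r"
      using assms(3) unfolding S_def by auto
    then have "g \<eta> \<in> underS r b"
      using assms(5) r.TOTALS refl_onD[OF r.REFL assms(5)] unfolding underS_def by blast
    then show ?thesis
      using underS_incr[OF r.TRANS r.ANTISYM] \<xi>' unfolding S_def by blast
  qed
  then show ?thesis using \<xi>' unfolding records_def S_def by blast
qed

lemma records_below:
  assumes "Well_order t" and "Well_order r" and "\<xi>' \<in> records t g r"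
  shows "g ` records t g r \<inter> underS r (g \<xi>') \<subseteq> g ` underS t \<xi>'"
proof
  interpret r: wo_rel r using assms(2) by (simp add: wo_rel_def)
  interpret t: wo_rel t using assms(1) by (simp add: wo_rel_def)
  fix x assume "x \<in> g ` records t g r \<inter> underS r (g \<xi>')"
  then obtain \<xi> where \<xi>: "\<xi> \<in> records t g r" "x = g \<xi>" "g \<xi> \<in> underS r (g \<xi>')"
    by blast
  have "\<xi>' \<notin> underS t \<xi>"
    using \<xi> r.ANTISYM unfolding records_def underS_def by (auto dest: antisymD)
  moreover have "\<xi> \<noteq> \<xi>'" using \<xi>(3) underS_notIn by fast
  ultimately have "\<xi> \<in> underS t \<xi>'"
    using \<xi>(1) assms(3) t.TOTALS unfolding records_def underS_def by blast
  then show "x \<in> g ` underS t \<xi>'" using \<xi>(2) by blast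
qed

lemma records_image_cofinal:
  assumes "Well_order t" and "Well_order r" and "cofinal_in r (g ` Field t) a"
  shows "cofinal_in r (g ` records t g r) a"
  unfolding cofinal_in_def
proof (intro conjI ballI)
  have "records t g r \<subseteq> Field t" by (auto simp: records_def)
  then show "g ` records t g r \<subseteq> underS r a"
    using assms(3) unfolding cofinal_in_def by blast
  have gF: "g ` Field t \<subseteq> Field r"
    using assms(3) Order_Relation.underS_Field[of r a] unfolding cofinal_in_def by blast
  fix b assume b: "b \<in> underS r a"
  then obtain \<xi> where \<xi>: "\<xi> \<in> Field t" "(b, g \<xi>) \<in> r"
    using assms(3) unfolding cofinal_in_def by blast
  have "b \<in> Field r" using b Order_Relation.underS_Field[of r a] by blast
  then show "\<exists>c\<in>g ` records t g r. (b, c) \<in> r"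
    using records_unbounded[OF assms(1,2) gF \<xi>(1)] \<xi>(2) by blast
qed

lemma card_records_segment_ordLess:
  assumes "Card_order t" and "Well_order r" and "\<xi> \<in> records t g r" and "(c, g \<xi>) \<in> r"
  shows "|g ` records t g r \<inter> underS r c| <o t"
proof -
  interpret r: wo_rel r using assms(2) by (simp add: wo_rel_def)
  have "g ` records t g r \<inter> underS r c \<subseteq> g ` records t g r \<inter> underS r (g \<xi>)"
    using underS_incr[OF r.TRANS r.ANTISYM assms(4)] by blast
  also have "\<dots> \<subseteq> g ` underS t \<xi>"
    by (rule records_below[OF card_order_on_well_order_on[OF assms(1)] assms(2,3)])
  finally have "|g ` records t g r \<inter> underS r c| \<le>o |g ` underS t \<xi>|"
    by (rule card_of_mono1)
  also have "|g ` underS t \<xi>| \<le>o |underS t \<xi>|"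
    by (rule card_of_image)
  also have "|underS t \<xi>| <o t"
    using assms(3) by (intro card_of_underS[OF assms(1)]) (simp add: records_def)
  finally show ?thesis .
qed

lemma cofinal_subset_small_segments:
  assumes "Well_order r" and "cofinal_in r D a" and "|D| \<le>o |T|"
  shows "\<exists>e\<subseteq>D. cofinal_in r e a \<and> |e| \<le>o |T| \<and> (\<forall>c\<in>underS r a. |e \<inter> underS r c| <o |T| )"
proof (cases "D = {}")
  case True
  then show ?thesis
    by (intro exI[of _ D]) (use assms(2,3) in \<open>auto simp: cofinal_in_def\<close>)
next
  case False
  have "\<exists>g. g ` T = D"
    using card_of_ordLeq2[OF False] assms(3) by (rule iffD2)
  then obtain g where g: "g ` T = D" ..
  define t where "t = |T|"
  have t: "Well_order t" "Card_order t" "Field t = T"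
    unfolding t_def by (simp_all add: Field_card_of card_of_card_order_on card_of_well_order_on)
  define e where "e = g ` records t g r"
  have "records t g r \<subseteq> T" using t(3) by (auto simp: records_def)
  then have "e \<subseteq> D" unfolding e_def g[symmetric] by (rule image_mono)
  moreover have e: "cofinal_in r e a"
    unfolding e_def using assms(2) by (intro records_image_cofinal[OF t(1) assms(1)]) (simp add: t(3) g)
  moreover have "|e| \<le>o |T|"
  proof -
    have "|e| \<le>o |records t g r|" unfolding e_def by (rule card_of_image)
    also have "|records t g r| \<le>o |T|"
      using \<open>records t g r \<subseteq> T\<close> by (rule card_of_mono1)
    finally show ?thesis .
  qed
  moreover have "|e \<inter> underS r c| <o |T|" if c: "c \<in> underS r a" for c
  proof -
    obtain \<xi> where \<xi>: "\<xi> \<in> records t g r" "(c, g \<xi>) \<in> r"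
      using e c unfolding cofinal_in_def e_def by blast
    have "|g ` records t g r \<inter> underS r c| <o t"
      by (rule card_records_segment_ordLess[OF t(2) assms(1) \<xi>])
    then show ?thesis unfolding e_def t_def .
  qed
  ultimately show ?thesis by blast
qed

lemma cofinal_in_if_small_segments:
  assumes "Well_order r" and "y \<subseteq> underS r a" and "|y| =o |T|"
    and "\<forall>c\<in>underS r a. |y \<inter> underS r c| <o |T|"
  shows "cofinal_in r y a"
  unfolding cofinal_in_def
proof (intro conjI ballI assms(2))
  interpret r: wo_rel r using assms(1) by (simp add: wo_rel_def)
  fix b assume b: "b \<in> underS r a"
  show "\<exists>c\<in>y. (b, c) \<in> r"
  proof (rule ccontr)
    assume above: "\<not> (\<exists>c\<in>y. (b, c) \<in> r)"
    have bF: "b \<in> Field r" using b Order_Relation.underS_Field[of r a] by blast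
    have "c \<in> underS r b" if "c \<in> y" for c
    proof (rule underS_I)
      have "c \<in> Field r" using that assms(2) Order_Relation.underS_Field[of r a] by blast
      then show "(c, b) \<in> r" using above that bF r.TOTALS by blast
      show "c \<noteq> b" using above that refl_onD[OF r.REFL bF] by blast
    qed
    then have "|y| \<le>o |y \<inter> underS r b|" by (intro card_of_mono1) blast
    also have "|y \<inter> underS r b| <o |T|" using assms(4) b by blast
    finally have "\<not> |y| =o |T|" by (rule not_ordLess_ordIso)
    then show False using assms(3) by contradiction
  qed
qed

lemma cof_eq_thin_cofinal_subset:
  assumes "Well_order r" and "cof_eq r a T" and "cofinal_in r A a"
  shows "\<exists>e\<subseteq>A. |e| =o |T| \<and> (\<forall>y\<subseteq>e. |y| =o |T| \<longrightarrow> cofinal_in r y a)"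
proof -
  interpret r: wo_rel r using assms(1) by (simp add: wo_rel_def)
  obtain D where D: "D \<subseteq> A" "cofinal_in r D a" "|D| \<le>o |T|"
    using cof_eq_cofinal_subset_card_le[OF r.TRANS assms(2,3)] by blast
  obtain e where e: "e \<subseteq> D" "cofinal_in r e a" "|e| \<le>o |T|"
    and small: "\<forall>c\<in>underS r a. |e \<inter> underS r c| <o |T|"
    using cofinal_subset_small_segments[OF assms(1) D(2,3)] by blast
  have "|T| \<le>o |e|" using assms(2) e(2) unfolding cof_eq_def by blast
  then have "|e| =o |T|" using e(3) by (simp add: ordIso_iff_ordLeq)
  moreover have "cofinal_in r y a" if "y \<subseteq> e" and "|y| =o |T|" for y
  proof (rule cofinal_in_if_small_segments[OF assms(1) _ that(2)])
    show "y \<subseteq> underS r a" using that(1) e(2) unfolding cofinal_in_def by blast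
    show "\<forall>c\<in>underS r a. |y \<inter> underS r c| <o |T|"
    proof
      fix c assume "c \<in> underS r a"
      have "|y \<inter> underS r c| \<le>o |e \<inter> underS r c|"
        using that(1) by (intro card_of_mono1) blast
      also have "|e \<inter> underS r c| <o |T|" using small \<open>c \<in> underS r a\<close> by blast
      finally show "|y \<inter> underS r c| <o |T|" .
    qed
  qed
  ultimately show ?thesis using e(1) D(1) by (meson subset_trans)
qed

lemma d_family_image:
  assumes "d_family T N X" and "bij_betw h N M" and "e \<subseteq> M" and "|e| =o |T|"
  shows "\<exists>x\<in>X. h ` x \<subseteq> e \<and> |h ` x| =o |T|"
proof -
  define e' where "e' = {n \<in> N. h n \<in> e}"
  have "bij_betw h e' e"
    using assms(2,3) unfolding e'_def bij_betw_def inj_on_def by auto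
  then have "|e'| =o |T|" using assms(4) by (rule ordIso_transitive[OF card_of_ordIsoI])
  then have "e' \<in> subsets_of_card N T" unfolding subsets_of_card_def e'_def by blast
  then obtain x where x: "x \<in> X" "x \<subseteq> e'" using assms(1) unfolding d_family_def by blast
  then have "x \<subseteq> N" "|x| =o |T|"
    using assms(1) unfolding d_family_def subsets_of_card_def by blast+
  moreover have "inj_on h x"
    using assms(2) \<open>x \<subseteq> N\<close> unfolding bij_betw_def by (blast intro: inj_on_subset)
  then have "|x| =o |h ` x|" by (rule card_of_ordIsoI[OF inj_on_imp_bij_betw])
  then have "|h ` x| =o |T|"
    using \<open>|x| =o |T|\<close> by (rule ordIso_transitive[OF ordIso_symmetric])
  moreover have "h ` x \<subseteq> e" using x(2) unfolding e'_def by blast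
  ultimately show ?thesis using x(1) by blast
qed

text \<open>The \<open>i\<close>-th guess at \<open>a\<close> is \<open>h[k i]\<close> for chosen bijections \<open>h : N \<rightarrow> a\<close> and
  \<open>k : a \<rightarrow> X\<close>. These exist only when \<open>|a| = |N|\<close>; otherwise the \<open>SOME\<close>s are arbitrary, and
  the fallback to \<open>a\<close> itself keeps every guess cofinal.\<close>

definition clubsuit_sequence :: "'k rel \<Rightarrow> 'n set \<Rightarrow> 'n set set \<Rightarrow> 'k \<Rightarrow> 'k \<Rightarrow> 'k set" where
  "clubsuit_sequence r N X a i =
     (let S = (SOME h. bij_betw h N (underS r a)) ` (SOME k. bij_betw k (underS r a) X) i
      in if cofinal_in r S a then S else underS r a)"

lemma clubsuit_sequence_cofinal:
  assumes "Well_order r"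
  shows "cofinal_in r (clubsuit_sequence r N X a i) a"
  using cofinal_in_underS[OF assms] unfolding clubsuit_sequence_def Let_def by simp

lemma clubsuit_sequence_guesses:
  assumes "Well_order r" and "d_family T N X" and "|X| =o |N|" and "|underS r a| =o |N|"
    and "cof_eq r a T" and "cofinal_in r (A \<inter> underS r a) a"
  shows "\<exists>i\<in>underS r a. clubsuit_sequence r N X a i \<subseteq> A"
proof -
  have "\<exists>e\<subseteq>A \<inter> underS r a. |e| =o |T| \<and> (\<forall>y\<subseteq>e. |y| =o |T| \<longrightarrow> cofinal_in r y a)"
    by (rule cof_eq_thin_cofinal_subset[OF assms(1,5,6)])
  then obtain e where e: "e \<subseteq> A \<inter> underS r a" "|e| =o |T|"
    and thin: "\<forall>y\<subseteq>e. |y| =o |T| \<longrightarrow> cofinal_in r y a"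
    by blast
  define h where "h = (SOME h. bij_betw h N (underS r a))"
  define k where "k = (SOME k. bij_betw k (underS r a) X)"
  have "|N| =o |underS r a|" using assms(4) by (rule ordIso_symmetric)
  then have "\<exists>h. bij_betw h N (underS r a)" by (rule iffD2[OF card_of_ordIso])
  then have h: "bij_betw h N (underS r a)" unfolding h_def by (rule someI_ex)
  have "|underS r a| =o |X|" using assms(4) ordIso_symmetric[OF assms(3)] by (rule ordIso_transitive)
  then have "\<exists>k. bij_betw k (underS r a) X" by (rule iffD2[OF card_of_ordIso])
  then have k: "bij_betw k (underS r a) X" unfolding k_def by (rule someI_ex)
  have "e \<subseteq> underS r a" using e(1) by blast
  then obtain x where x: "x \<in> X" "h ` x \<subseteq> e" "|h ` x| =o |T|"
    using d_family_image[OF assms(2) h _ e(2)] by blast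
  moreover have "X = k ` underS r a" using k unfolding bij_betw_def by simp
  ultimately obtain i where i: "i \<in> underS r a" "k i = x" by blast
  have "cofinal_in r (h ` x) a" using thin x(2,3) by blast
  then have "clubsuit_sequence r N X a i = h ` x"
    unfolding clubsuit_sequence_def Let_def h_def[symmetric] k_def[symmetric] i(2) by simp
  then show ?thesis using i(1) x(2) e(1) by auto
qed

lemma infinite_diff_under:
  assumes "Card_order r" and "infinite (Field r)" and "|A| =o r" and "b \<in> Field r"
  shows "infinite (A - under r b)"
proof
  assume "finite (A - under r b)"
  have fin: "|F| <o r" if "finite F" for F :: "'a set"
    using finite_ordLess_infinite[OF card_of_Well_order card_order_on_well_order_on[OF assms(1)]]
      that assms(2) by (simp add: Field_card_of)
  have "under r b = underS r b \<union> {b}"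
    using assms(1,4) by (simp add: Refl_under_underS card_order_on_def wo_rel.REFL wo_rel_def)
  moreover have "|underS r b \<union> {b}| <o r"
    by (rule card_of_Un_ordLess_infinite_Field[OF assms(2,1) card_of_underS[OF assms(1,4)] fin]) simp
  ultimately have "|under r b| <o r" by simp
  then have "|under r b \<union> (A - under r b)| <o r"
    using card_of_Un_ordLess_infinite_Field[OF assms(2,1)] fin \<open>finite (A - under r b)\<close> by blast
  moreover have "|A| \<le>o |under r b \<union> (A - under r b)|" by (intro card_of_mono1) blast
  ultimately have "|A| <o r" by (rule ordLeq_ordLess_trans[rotated])
  then show False using assms(3) not_ordLess_ordIso by blast
qed

lemma infinite_Int_under:
  assumes "Card_order r" and "regularCard r" and "natLeq <o r"
    and "infinite A" and "A \<subseteq> Field r"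
  shows "\<exists>c\<in>Field r. infinite (A \<inter> under r c)"
proof -
  obtain f :: "nat \<Rightarrow> 'a" where f: "inj f" "range f \<subseteq> A"
    using infinite_countable_subset[OF assms(4)] by blast
  have "|range f| \<le>o |UNIV :: nat set|" by (rule card_of_image)
  also have "|UNIV :: nat set| =o natLeq" by (rule card_of_nat)
  also note assms(3)
  finally have "|range f| <o r" .
  moreover have "range f \<subseteq> Field r" using f(2) assms(5) by blast
  ultimately have "\<exists>c\<in>Field r. range f \<subseteq> under r c"
    by (intro regularCard_small_subset_bounded[OF assms(1,2)])
  then obtain c where c: "c \<in> Field r" "range f \<subseteq> under r c" ..
  have "range f \<subseteq> A \<inter> under r c" using f(2) c(2) by blast
  then have "infinite (A \<inter> under r c)" using inj_on_finite[OF f(1)] by blast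
  then show ?thesis using c(1) by blast
qed

lemma exists_limit_point:
  assumes "Well_order r" and "infinite (A \<inter> under r c)"
  shows "\<exists>a. infinite (A \<inter> under r a) \<and> cofinal_in r (A \<inter> underS r a) a"
proof -
  interpret r: wo_rel r using assms(1) by (simp add: wo_rel_def)
  define S where "S = {d. infinite (A \<inter> under r d)}"
  have "c \<in> S" using assms(2) by (simp add: S_def)
  then obtain a where "a \<in> S" and least: "\<And>b. (b, a) \<in> r - Id \<Longrightarrow> b \<notin> S"
    using wfE_min[OF r.WF] by metis
  then have a: "infinite (A \<inter> under r a)" by (simp add: S_def)
  have "\<exists>x\<in>A \<inter> underS r a. (b, x) \<in> r" if b: "b \<in> underS r a" for b
  proof -
    have "finite (A \<inter> under r b \<union> {a})" using least b unfolding S_def underS_def by simp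
    then have "\<not> A \<inter> under r a \<subseteq> A \<inter> under r b \<union> {a}"
      using a finite_subset by blast
    then obtain x where x: "x \<in> A \<inter> under r a" "x \<notin> A \<inter> under r b \<union> {a}"
      by blast
    have "x \<in> Field r" using x(1) under_Field[of r a] by blast
    moreover have "b \<in> Field r" using b Order_Relation.underS_Field[of r a] by blast
    ultimately have "(b, x) \<in> r" using x r.TOTALS unfolding under_def by blast
    moreover have "x \<in> A \<inter> underS r a" using x unfolding under_def underS_def by blast
    ultimately show ?thesis by blast
  qed
  then show ?thesis using a unfolding cofinal_in_def by blast
qed

lemma exists_limit_point_above:
  assumes "Card_order r" and "regularCard r" and "natLeq <o r"
    and "A \<subseteq> Field r" and "|A| =o r" and "b \<in> Field r"
  shows "\<exists>a. b \<in> underS r a \<and> cofinal_in r (A \<inter> underS r a) a"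
proof -
  have wo: "Well_order r" using assms(1) by (rule card_order_on_well_order_on)
  interpret r: wo_rel r using wo by (simp add: wo_rel_def)
  have "natLeq \<le>o |Field r|"
    using ordLess_imp_ordLeq[OF assms(3)] ordIso_symmetric[OF card_of_Field_ordIso[OF assms(1)]]
    by (rule ordLeq_ordIso_trans)
  then have "infinite (Field r)" using infinite_iff_natLeq_ordLeq by blast
  define A' where "A' = A - under r b"
  have "infinite A'"
    unfolding A'_def by (rule infinite_diff_under[OF assms(1) \<open>infinite (Field r)\<close> assms(5,6)])
  moreover have "A' \<subseteq> Field r" using assms(4) by (auto simp: A'_def)
  ultimately obtain c where "infinite (A' \<inter> under r c)"
    using infinite_Int_under[OF assms(1-3)] by blast
  then obtain a where a: "infinite (A' \<inter> under r a)" "cofinal_in r (A' \<inter> underS r a) a"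
    using exists_limit_point[OF wo] by blast
  have "cofinal_in r (A \<inter> underS r a) a"
    using a(2) by (rule cofinal_in_mono) (auto simp: A'_def)
  moreover have "b \<in> underS r a"
  proof -
    obtain x where x: "x \<in> A" "(x, b) \<notin> r" "(x, a) \<in> r"
      using infinite_imp_nonempty[OF a(1)] unfolding A'_def under_def by blast
    then have "b \<in> underS r x"
      using assms(4,6) r.TOTALS refl_onD[OF r.REFL assms(6)] unfolding underS_def by blast
    then show ?thesis using underS_incr[OF r.TRANS r.ANTISYM x(3)] by blast
  qed
  ultimately show ?thesis by blast
qed

lemma limit_of_limit_points:
  assumes "Well_order r" and "is_limit r a"
    and "\<forall>b\<in>underS r a. \<exists>c\<in>underS r a. (b, c) \<in> r \<and> cofinal_in r (A \<inter> underS r c) c"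
  shows "cofinal_in r (A \<inter> underS r a) a"
  unfolding cofinal_in_def
proof (intro conjI ballI Int_lower2)
  interpret r: wo_rel r using assms(1) by (simp add: wo_rel_def)
  fix b assume b: "b \<in> underS r a"
  obtain b' where b': "b' \<in> underS r a" "b \<in> underS r b'"
    using assms(2) b unfolding is_limit_def by blast
  then obtain c where c: "c \<in> underS r a" "(b', c) \<in> r" "cofinal_in r (A \<inter> underS r c) c"
    using assms(3) by blast
  have "b \<in> underS r c" using underS_incr[OF r.TRANS r.ANTISYM c(2)] b'(2) by blast
  then obtain x where "x \<in> A \<inter> underS r c" "(b, x) \<in> r"
    using c(3) unfolding cofinal_in_def by blast
  moreover have "underS r c \<subseteq> underS r a"
    using c(1) underS_incr[OF r.TRANS r.ANTISYM] unfolding underS_def by blast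
  ultimately show "\<exists>x\<in>A \<inter> underS r a. (b, x) \<in> r" by blast
qed

lemma club_limit_points_above:
  assumes "Card_order r" and "regularCard r" and "natLeq <o r"
    and "A \<subseteq> Field r" and "|A| =o r" and "a\<^sub>0 \<in> Field r"
  shows "club r {a. a\<^sub>0 \<in> underS r a \<and> cofinal_in r (A \<inter> underS r a) a}"
    (is "club r ?C")
  unfolding club_def
proof (intro conjI ballI allI impI)
  have wo: "Well_order r" using assms(1) by (rule card_order_on_well_order_on)
  interpret r: wo_rel r using wo by (simp add: wo_rel_def)
  show "?C \<subseteq> Field r" unfolding underS_def by (auto intro: FieldI2)
  show "\<exists>c\<in>?C. (b, c) \<in> r \<and> b \<noteq> c" if b: "b \<in> Field r" for b
  proof -
    let ?b' = "r.max2 b a\<^sub>0"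
    have "?b' \<in> Field r" using r.max2_among[OF b assms(6)] b assms(6) by auto
    then obtain a where a: "?b' \<in> underS r a" "cofinal_in r (A \<inter> underS r a) a"
      using exists_limit_point_above[OF assms(1-5)] by blast
    have "b \<in> underS r a" "a\<^sub>0 \<in> underS r a"
      using r.max2_greater[OF b assms(6)] le_underS_trans[OF wo _ a(1)] by blast+
    then show ?thesis using a(2) unfolding underS_def by blast
  qed
  fix a assume "is_limit r a \<and> (\<forall>b\<in>underS r a. \<exists>c\<in>?C \<inter> underS r a. (b, c) \<in> r)"
  then have lim: "is_limit r a" and below: "\<forall>b\<in>underS r a. \<exists>c\<in>?C \<inter> underS r a. (b, c) \<in> r"
    by auto
  obtain c where "c \<in> ?C" "c \<in> underS r a"
    using lim below unfolding is_limit_def by blast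
  then have "a\<^sub>0 \<in> underS r a" using underS_incr[OF r.TRANS r.ANTISYM] unfolding underS_def by blast
  moreover have "cofinal_in r (A \<inter> underS r a) a"
    using below by (intro limit_of_limit_points[OF wo lim]) blast
  ultimately show "a \<in> ?C" by blast
qed

lemma dual_filter_NS_restr_if_club:
  assumes "club r C" and "G \<subseteq> Field r" and "C \<inter> E_cof r T \<subseteq> G"
  shows "G \<in> dual_filter r (NS_restr r T)"
  using assms unfolding dual_filter_def NS_restr_def stationary_def by blast

lemma regularCard_ordIso_cardSuc:
  assumes "infinite N" and "r =o cardSuc |N|"
  shows "regularCard r"
proof -
  have "Cinfinite |N|" using assms(1) by (simp add: cinfinite_def Field_card_of card_of_card_order_on)
  then show ?thesis
    by (intro regularCard_ordIso[OF ordIso_symmetric[OF assms(2)]] Cinfinite_cardSuc regularCard_cardSuc)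
qed

lemma exists_final_segment_card_eq:
  assumes "Card_order r" and "regularCard r" and "r =o cardSuc |N|"
  shows "\<exists>a\<^sub>0\<in>Field r. \<forall>a. a\<^sub>0 \<in> underS r a \<longrightarrow> |underS r a| =o |N|"
proof -
  have "|N| <o r"
    using cardSuc_greater[OF card_of_Card_order] ordIso_symmetric[OF assms(3)]
    by (rule ordLess_ordIso_trans)
  have "|N| \<le>o |Field r|"
    using ordLess_imp_ordLeq[OF \<open>|N| <o r\<close>] ordIso_symmetric[OF card_of_Field_ordIso[OF assms(1)]]
    by (rule ordLeq_ordIso_trans)
  then have "\<exists>f. inj_on f N \<and> f ` N \<subseteq> Field r" by (rule iffD2[OF card_of_ordLeq])
  then obtain f where f: "inj_on f N" "f ` N \<subseteq> Field r" by blast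
  have "|f ` N| \<le>o |N|" by (rule card_of_image)
  also note \<open>|N| <o r\<close>
  finally have "\<exists>a\<^sub>0\<in>Field r. f ` N \<subseteq> under r a\<^sub>0"
    by (rule regularCard_small_subset_bounded[OF assms(1,2) f(2)])
  then obtain a\<^sub>0 where a\<^sub>0: "a\<^sub>0 \<in> Field r" "f ` N \<subseteq> under r a\<^sub>0" ..
  have "|underS r a| =o |N|" if "a\<^sub>0 \<in> underS r a" for a
  proof -
    have "under r a\<^sub>0 \<subseteq> underS r a"
      using le_underS_trans[OF card_order_on_well_order_on[OF assms(1)] _ that]
      unfolding under_def by blast
    then have "f ` N \<subseteq> underS r a" using a\<^sub>0(2) by blast
    have "|N| =o |f ` N|" by (rule card_of_ordIsoI[OF inj_on_imp_bij_betw[OF f(1)]])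
    also have "|f ` N| \<le>o |underS r a|" using \<open>f ` N \<subseteq> underS r a\<close> by (rule card_of_mono1)
    finally have "|N| \<le>o |underS r a|" .
    moreover have "|underS r a| \<le>o |N|"
    proof -
      have "a \<in> Field r" using that unfolding underS_def by (auto intro: FieldI2)
      then have "|underS r a| <o cardSuc |N|"
        using ordLess_ordIso_trans[OF card_of_underS[OF assms(1)] assms(3)] by blast
      then show ?thesis by (simp add: cardSuc_ordLeq_ordLess[OF card_of_Card_order card_of_Card_order])
    qed
    ultimately show ?thesis by (simp add: ordIso_iff_ordLeq)
  qed
  then show ?thesis using a\<^sub>0(1) by blast
qed

lemma clubsuit_sequence_guesses_almost_everywhere:
  assumes "Card_order r" and "regularCard r" and "natLeq <o r" and "r =o cardSuc |N|"
    and "d_family T N X" and "|X| =o |N|" and "A \<subseteq> Field r" and "|A| =o r"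
  shows "{a \<in> acc_set r. \<exists>i\<in>underS r a. clubsuit_sequence r N X a i \<subseteq> A}
           \<in> dual_filter r (NS_restr r T)"
proof -
  have wo: "Well_order r" using assms(1) by (rule card_order_on_well_order_on)
  obtain a\<^sub>0 where a\<^sub>0: "a\<^sub>0 \<in> Field r" "\<forall>a. a\<^sub>0 \<in> underS r a \<longrightarrow> |underS r a| =o |N|"
    using exists_final_segment_card_eq[OF assms(1,2,4)] by blast
  let ?C = "{a. a\<^sub>0 \<in> underS r a \<and> cofinal_in r (A \<inter> underS r a) a}"
  have "club r ?C" by (rule club_limit_points_above[OF assms(1-3,7,8) a\<^sub>0(1)])
  moreover have "{a \<in> acc_set r. \<exists>i\<in>underS r a. clubsuit_sequence r N X a i \<subseteq> A} \<subseteq> Field r"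
    unfolding acc_set_def is_limit_def by blast
  moreover have "\<exists>i\<in>underS r a. clubsuit_sequence r N X a i \<subseteq> A"
    if a: "a \<in> ?C" "a \<in> E_cof r T" for a
  proof (rule clubsuit_sequence_guesses[OF wo assms(5,6)])
    show "|underS r a| =o |N|" using a(1) a\<^sub>0(2) by blast
    show "cof_eq r a T" using a(2) unfolding E_cof_def by blast
    show "cofinal_in r (A \<inter> underS r a) a" using a(1) by simp
  qed
  then have "?C \<inter> E_cof r T \<subseteq> {a \<in> acc_set r. \<exists>i\<in>underS r a. clubsuit_sequence r N X a i \<subseteq> A}"
    unfolding E_cof_def acc_set_def by blast
  ultimately show ?thesis by (rule dual_filter_NS_restr_if_club)
qed

theorem corollary3p27:
  fixes r :: "'k rel" and N :: "'n set" and T :: "'t set"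
  assumes "Card_order r"
    and "(r, cardSuc (card_of N)) \<in> ordIso"
    and "infinite T"
    and "regularCard (card_of T)"
    and "(card_of T, card_of N) \<in> ordLess"
    and "d_equals_nu T N"
  shows "clubsuit_star r (NS_restr r T)"
proof -
  have wo: "Well_order r" using assms(1) by (rule card_order_on_well_order_on)
  have "infinite N" using card_of_ordLeq_infinite[OF ordLess_imp_ordLeq[OF assms(5)] assms(3)] .
  then have reg: "regularCard r" using assms(2) by (rule regularCard_ordIso_cardSuc)
  have "natLeq \<le>o |N|" using \<open>infinite N\<close> infinite_iff_natLeq_ordLeq by blast
  also have "|N| <o cardSuc |N|" by (rule cardSuc_greater[OF card_of_Card_order])
  also note ordIso_symmetric[OF assms(2)]
  finally have nat: "natLeq <o r" .
  obtain X where X: "d_family T N X" "|X| =o |N|" using assms(6) unfolding d_equals_nu_def by blast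
  show ?thesis
    unfolding clubsuit_star_def
  proof (intro exI[of _ "clubsuit_sequence r N X"] conjI ballI allI impI)
    show "cofinal_in r (clubsuit_sequence r N X a i) a" for a i
      by (rule clubsuit_sequence_cofinal[OF wo])
    show "{a \<in> acc_set r. \<exists>i\<in>underS r a. clubsuit_sequence r N X a i \<subseteq> A}
            \<in> dual_filter r (NS_restr r T)" if "A \<subseteq> Field r \<and> |A| =o r" for A
      using that by (intro clubsuit_sequence_guesses_almost_everywhere[OF assms(1) reg nat assms(2) X]) auto
  qed
qed

end
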